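(* Let $\theta\in\mathbb{R}$, let $\mathcal{A}_\theta$ be the smooth noncommutative torus and let $\tau\in\mathbb{C}$ with $\Im\tau>0$. For every projection $p\in\mathcal{A}_\theta$ (i.e. $p=p^2=p^*$), define $$S_{(\tau)}(p)=\frac{1}{2\pi}\int \sqrt{\det g}\; g^{\mu\nu}\,\partial_\mu p\,\partial_\nu p ,\qquad \psi(p)=-\frac{1}{2\pi i}\int p\big[\partial_1(p)\partial_2(p)-\partial_2(p)\partial_1(p)\big].$$ Then $$S_{(\tau)}(p)\ \geq\ 2\,|\psi(p)| .$$ Moreover, equality $S_{(\tau)}(p)=2|\psi(p)|$ holds whenever $p$ satisfies one of the equations $\bar{\partial}_{(\tau)}(p)\,p=0$, $p\,\partial_{(\tau)}(p)=0$, $\partial_{(\tau)}(p)\,p=0$, $p\,\bar{\partial}_{(\tau)}(p)=0$.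
   Context: $\mathcal{A}_\theta$ is the unital $*$-algebra of series $a=\sum_{(m,n)\in\mathbb{Z}^2}a_{mn}U_1^mU_2^n$ with $(a_{mn})$ a complex Schwartz (rapidly decreasing) sequence on $\mathbb{Z}^2$, where $U_1,U_2$ are unitaries with $U_2U_1=e^{2\pi i\theta}U_1U_2$. The integral $\int:\mathcal{A}_\theta\to\mathbb{C}$ denotes the normalized positive faithful trace $\int\sum a_{mn}U_1^mU_2^n:=a_{00}$. The derivations $\partial_1,\partial_2$ of $\mathcal{A}_\theta$ are defined by $\partial_\mu(U_\nu)=2\pi i\,\delta_\mu^\nu U_\nu$ ($\mu,\nu=1,2$), extended by the Leibniz rule and linearity. The metric associated with $\tau$ is $g=(g_{\mu\nu})=\begin{pmatrix}1&\Re\tau\\ \Re\tau&|\tau|^2\end{pmatrix}$, with inverse $(g^{\mu\nu})=\frac{1}{(\Im\tau)^2}\begin{pmatrix}|\tau|^2&-\Re\tau\\-\Re\tau&1\end{pmatrix}$ and $\sqrt{\det g}=\Im\tau$; repeated indices are summed over $1,2$. The derivations $\partial_{(\tau)}=\frac{1}{\tau-\bar\tau}(-\bar\tau\partial_1+\partial_2)$ and $\bar\partial_{(\tau)}=\frac{1}{\tau-\bar\tau}(\tau\partial_1-\partial_2)$. *)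

theory Defs
  imports "HOL-Analysis.Analysis"
begin

text \<open>An element a = sum a_mn U1^m U2^n of the smooth noncommutative torus is
represented by its coefficient function (m,n) -> a_mn.\<close>

type_synonym nct = "int \<times> int \<Rightarrow> complex"

definition nct_schwartz :: "nct \<Rightarrow> bool" where
  "nct_schwartz a \<longleftrightarrow>
     (\<forall>k::nat. \<exists>C::real. \<forall>m n. (1 + real_of_int \<bar>m\<bar> + real_of_int \<bar>n\<bar>) ^ k * cmod (a (m, n)) \<le> C)"

text \<open>Product: U1^m U2^n U1^p U2^q = e^{2 pi i theta n p} U1^(m+p) U2^(n+q).\<close>
definition nct_mult :: "real \<Rightarrow> nct \<Rightarrow> nct \<Rightarrow> nct" where
  "nct_mult \<theta> a b = (\<lambda>(r, s). \<Sum>\<^sub>\<infinity>(m, n)\<in>UNIV.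
      a (m, n) * b (r - m, s - n) * exp (2 * pi * \<i> * of_real \<theta> * of_int n * of_int (r - m)))"

text \<open>Adjoint: (U1^m U2^n)^* = U2^{-n} U1^{-m} = e^{2 pi i theta m n} U1^{-m} U2^{-n}.\<close>
definition nct_star :: "real \<Rightarrow> nct \<Rightarrow> nct" where
  "nct_star \<theta> a = (\<lambda>(m, n). cnj (a (- m, - n)) * exp (2 * pi * \<i> * of_real \<theta> * of_int m * of_int n))"

definition nct_d1 :: "nct \<Rightarrow> nct" where
  "nct_d1 a = (\<lambda>(m, n). 2 * pi * \<i> * of_int m * a (m, n))"

definition nct_d2 :: "nct \<Rightarrow> nct" where
  "nct_d2 a = (\<lambda>(m, n). 2 * pi * \<i> * of_int n * a (m, n))"

definition nct_deriv :: "nat \<Rightarrow> nct \<Rightarrow> nct" where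
  "nct_deriv \<mu> = (if \<mu> = 1 then nct_d1 else nct_d2)"

definition nct_int :: "nct \<Rightarrow> complex" where
  "nct_int a = a (0, 0)"

definition nct_projection :: "real \<Rightarrow> nct \<Rightarrow> bool" where
  "nct_projection \<theta> p \<longleftrightarrow> nct_schwartz p \<and> p = nct_mult \<theta> p p \<and> p = nct_star \<theta> p"

definition metric :: "complex \<Rightarrow> nat \<Rightarrow> nat \<Rightarrow> real" where
  "metric \<tau> \<mu> \<nu> =
     (if \<mu> = 1 \<and> \<nu> = 1 then 1
      else if \<mu> = 2 \<and> \<nu> = 2 then (cmod \<tau>)\<^sup>2
      else Re \<tau>)"

definition metric_inv :: "complex \<Rightarrow> nat \<Rightarrow> nat \<Rightarrow> real" where
  "metric_inv \<tau> \<mu> \<nu> = (1 / (Im \<tau>)\<^sup>2) *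
     (if \<mu> = 1 \<and> \<nu> = 1 then (cmod \<tau>)\<^sup>2
      else if \<mu> = 2 \<and> \<nu> = 2 then 1
      else - Re \<tau>)"

definition sqrt_det_metric :: "complex \<Rightarrow> real" where
  "sqrt_det_metric \<tau> = sqrt (metric \<tau> 1 1 * metric \<tau> 2 2 - metric \<tau> 1 2 * metric \<tau> 2 1)"

definition S_tau :: "complex \<Rightarrow> real \<Rightarrow> nct \<Rightarrow> complex" where
  "S_tau \<tau> \<theta> p = (1 / (2 * pi)) *
     (\<Sum>\<mu>\<in>{1,2}. \<Sum>\<nu>\<in>{1,2}. of_real (sqrt_det_metric \<tau> * metric_inv \<tau> \<mu> \<nu>) *
        nct_int (nct_mult \<theta> (nct_deriv \<mu> p) (nct_deriv \<nu> p)))"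

definition psi :: "real \<Rightarrow> nct \<Rightarrow> complex" where
  "psi \<theta> p = - (1 / (2 * pi * \<i>)) *
     nct_int (nct_mult \<theta> p (\<lambda>k. nct_mult \<theta> (nct_d1 p) (nct_d2 p) k
                               - nct_mult \<theta> (nct_d2 p) (nct_d1 p) k))"

definition del_tau :: "complex \<Rightarrow> nct \<Rightarrow> nct" where
  "del_tau \<tau> a = (\<lambda>k. (1 / (\<tau> - cnj \<tau>)) * (- cnj \<tau> * nct_d1 a k + nct_d2 a k))"

definition delbar_tau :: "complex \<Rightarrow> nct \<Rightarrow> nct" where
  "delbar_tau \<tau> a = (\<lambda>k. (1 / (\<tau> - cnj \<tau>)) * (\<tau> * nct_d1 a k - nct_d2 a k))"

end

theory Submission
  imports Defs
begin

text \<open>Write E = del_tau \<tau> p and F = delbar_tau \<tau> p, so that d1 p = E + F and d2 p = \<tau> E + cnj \<tau> F.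
The metric is isotropic on this frame, hence S(p) = c \<integral>(E F + F E) and \<psi>(p) = c \<integral>p (E F - F E)
with c = Im \<tau> / \<pi> > 0. For a projection p, Leibniz' rule applied to p = p p gives D = D p + p D for every
derivative D of p, so p D p = 0. Together with the trace property this yields
\<integral>E F = \<integral>F E = X + Y, where X = \<integral>(p E) F = \<integral>(F p)* (F p) \<ge> 0 and Y = \<integral>(p F) E = \<integral>(E p)* (E p) \<ge> 0,
because (F p)* = p E and (E p)* = p F. Thus S(p) = 2c (X + Y) \<ge> 2c \<bar>X - Y\<bar> = 2 \<bar>\<psi>(p)\<bar>, with equality
when X = 0 or Y = 0, which each of the four equations forces.
The algebra is carried out in l1(\<int> \<times> \<int>) with the twisted convolution product, which contains the
Schwartz elements together with their derivatives.\<close>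

lemma summable_on_product_nonneg:
  fixes f :: "'a \<Rightarrow> real" and g :: "'b \<Rightarrow> real"
  assumes "f summable_on UNIV" "g summable_on UNIV" "\<And>x. f x \<ge> 0" "\<And>y. g y \<ge> 0"
  shows "(\<lambda>(x, y). f x * g y) summable_on UNIV"
proof -
  let ?h = "\<lambda>(x, y). f x * g y"
  have "(\<lambda>z. norm (?h z)) summable_on Sigma UNIV (\<lambda>_. UNIV)"
  proof (subst Infinite_Sum.abs_summable_on_Sigma_iff, intro conjI ballI)
    fix x
    show "(\<lambda>y. norm (?h (x, y))) summable_on UNIV"
      using summable_on_cmult_right[OF assms(2), of "f x"] assms(3,4) by (simp add: abs_mult)
  next
    have "(\<lambda>x. f x * (\<Sum>\<^sub>\<infinity>y. g y)) summable_on UNIV"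
      using assms(1) by (rule summable_on_cmult_left)
    moreover have "norm (\<Sum>\<^sub>\<infinity>y. norm (?h (x, y))) = f x * (\<Sum>\<^sub>\<infinity>y. g y)" for x
    proof -
      have "(\<Sum>\<^sub>\<infinity>y. norm (?h (x, y))) = f x * (\<Sum>\<^sub>\<infinity>y. g y)"
        using assms(3,4) by (simp add: abs_mult infsum_cmult_right')
      moreover have "(\<Sum>\<^sub>\<infinity>y. g y) \<ge> 0"
        using assms(4) by (rule infsum_nonneg)
      ultimately show ?thesis
        using assms(3) by simp
    qed
    ultimately show "(\<lambda>x. norm (\<Sum>\<^sub>\<infinity>y. norm (?h (x, y)))) summable_on UNIV"
      by simp
  qed
  moreover have "norm (?h z) = ?h z" for z
    using assms(3,4) by (cases z) simp
  ultimately show ?thesis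
    by simp
qed

lemma summable_on_int_inverse_square: "(\<lambda>m::int. 1 / (1 + real_of_int \<bar>m\<bar>) ^ 2) summable_on UNIV"
proof -
  let ?w = "\<lambda>m::int. 1 / (1 + real_of_int \<bar>m\<bar>) ^ 2"
  have "summable (\<lambda>n::nat. inverse (real (Suc n) ^ 2))"
    using inverse_power_summable[of 2, where 'a=real] by (subst summable_Suc_iff) simp
  then have nat: "(\<lambda>n::nat. 1 / (1 + real n) ^ 2) summable_on UNIV"
    by (subst summable_on_UNIV_nonneg_real_iff) (auto simp: inverse_eq_divide add.commute)
  have "?w summable_on range int"
    by (subst summable_on_reindex) (use nat in \<open>auto simp: o_def inj_on_def\<close>)
  moreover have "?w summable_on range (\<lambda>n::nat. - int n)"
    by (subst summable_on_reindex) (use nat in \<open>auto simp: o_def inj_on_def\<close>)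
  ultimately have "?w summable_on (range int \<union> range (\<lambda>n::nat. - int n))"
    by (rule summable_on_union)
  moreover have "range int \<union> range (\<lambda>n::nat. - int n) = UNIV"
  proof -
    have "x \<in> range int \<union> range (\<lambda>n::nat. - int n)" for x :: int
    proof (cases "x \<ge> 0")
      case True
      then show ?thesis by (auto intro: image_eqI[of _ _ "nat x"])
    next
      case False
      then show ?thesis by (auto intro!: UnI2 image_eqI[of _ _ "nat (- x)"])
    qed
    then show ?thesis by auto
  qed
  ultimately show ?thesis
    by simp
qed

lemma bij_betw_convolution:
  "bij_betw (\<lambda>(q, m). (m, q - m)) (UNIV :: ('a::ab_group_add \<times> 'a) set) UNIV"
  by (rule bij_betwI[where g="\<lambda>(m, j). (m + j, m)"]) auto

lemma infsum_convolution_reindex: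
  fixes G :: "'a::ab_group_add \<times> 'a \<Rightarrow> 'b::banach"
  assumes "G summable_on UNIV"
  shows "(\<Sum>\<^sub>\<infinity>m. \<Sum>\<^sub>\<infinity>j. G (m, j)) = (\<Sum>\<^sub>\<infinity>q. \<Sum>\<^sub>\<infinity>m. G (m, q - m))"
proof -
  have "(\<Sum>\<^sub>\<infinity>m. \<Sum>\<^sub>\<infinity>j. G (m, j)) = infsum G UNIV"
    using infsum_Sigma_banach[of G UNIV "\<lambda>_. UNIV"] assms by simp
  also have "\<dots> = (\<Sum>\<^sub>\<infinity>x. G ((\<lambda>(q, m). (m, q - m)) x))"
    by (rule infsum_reindex_bij_betw[OF bij_betw_convolution, symmetric])
  also have "\<dots> = (\<Sum>\<^sub>\<infinity>q. \<Sum>\<^sub>\<infinity>m. G (m, q - m))"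
  proof -
    have "(\<lambda>x. G ((\<lambda>(q, m). (m, q - m)) x)) summable_on UNIV"
      using assms by (subst summable_on_reindex_bij_betw[OF bij_betw_convolution])
    then show ?thesis
      using infsum_Sigma_banach[of "\<lambda>x. G ((\<lambda>(q, m). (m, q - m)) x)" UNIV "\<lambda>_. UNIV"] by simp
  qed
  finally show ?thesis .
qed

section \<open>The twisted convolution algebra\<close>

definition nct_phase :: "real \<Rightarrow> int \<Rightarrow> complex" where
  "nct_phase \<theta> z = exp (2 * pi * \<i> * of_real \<theta> * of_int z)"

lemma nct_phase_add: "nct_phase \<theta> (a + b) = nct_phase \<theta> a * nct_phase \<theta> b"
  unfolding nct_phase_def by (simp add: exp_add[symmetric] algebra_simps)

lemma nct_phase_mult_eqI: "a + b = c \<Longrightarrow> nct_phase \<theta> a * nct_phase \<theta> b = nct_phase \<theta> c"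
  by (metis nct_phase_add)

lemma norm_nct_phase [simp]: "norm (nct_phase \<theta> z) = 1"
  unfolding nct_phase_def by (simp add: norm_exp_eq_Re)

lemma cnj_nct_phase: "cnj (nct_phase \<theta> z) = nct_phase \<theta> (- z)"
  unfolding nct_phase_def by (simp add: exp_cnj)

lemma nct_phase_0 [simp]: "nct_phase \<theta> 0 = 1"
  by (simp add: nct_phase_def)

lemma nct_mult_apply:
  "nct_mult \<theta> a b k = (\<Sum>\<^sub>\<infinity>m. a m * b (k - m) * nct_phase \<theta> (snd m * (fst k - fst m)))"
  by (cases k) (simp add: nct_mult_def nct_phase_def case_prod_unfold mult.assoc minus_prod_def)

lemma nct_star_apply: "nct_star \<theta> a m = cnj (a (- m)) * nct_phase \<theta> (fst m * snd m)"
  by (cases m) (simp add: nct_star_def nct_phase_def mult.assoc)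

lemma nct_d1_eq: "nct_d1 a = (\<lambda>m. 2 * pi * \<i> * of_int (fst m) * a m)"
  by (auto simp: nct_d1_def)

lemma nct_d2_eq: "nct_d2 a = (\<lambda>m. 2 * pi * \<i> * of_int (snd m) * a m)"
  by (auto simp: nct_d2_def)

lemma nct_star_zero [simp]: "nct_star \<theta> (\<lambda>_. 0) = (\<lambda>_. 0)"
  by (rule ext) (simp add: nct_star_apply)

lemma nct_star_lincomb:
  "nct_star \<theta> (\<lambda>k. x * a k + y * b k) = (\<lambda>k. cnj x * nct_star \<theta> a k + cnj y * nct_star \<theta> b k)"
  by (rule ext) (simp add: nct_star_apply algebra_simps)

lemma nct_star_d1: "nct_star \<theta> (nct_d1 a) = nct_d1 (nct_star \<theta> a)"
  by (rule ext) (simp add: nct_star_apply nct_d1_eq)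

lemma nct_star_d2: "nct_star \<theta> (nct_d2 a) = nct_d2 (nct_star \<theta> a)"
  by (rule ext) (simp add: nct_star_apply nct_d2_eq)

abbreviation nct_l1 :: "nct \<Rightarrow> bool" where
  "nct_l1 a \<equiv> (\<lambda>k. norm (a k)) summable_on UNIV"

lemma nct_l1_bounded:
  assumes "nct_l1 a"
  obtains B where "\<And>k. norm (a k) \<le> B"
proof
  fix k
  have "(\<Sum>\<^sub>\<infinity>x\<in>{k}. norm (a x)) \<le> (\<Sum>\<^sub>\<infinity>x. norm (a x))"
    by (rule infsum_mono_neutral) (use assms in auto)
  then show "norm (a k) \<le> (\<Sum>\<^sub>\<infinity>x. norm (a x))"
    by simp
qed

lemma nct_l1_lincomb:
  assumes "nct_l1 a" "nct_l1 b"
  shows "nct_l1 (\<lambda>k. x * a k + y * b k)"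
  using assms
  by (auto intro!: summable_on_add summable_on_cmult_right simp: summable_on_iff_abs_summable_on_complex[symmetric])

lemma nct_schwartz_weighted_l1:
  assumes "nct_schwartz a"
  shows "(\<lambda>(m, n). (1 + real_of_int \<bar>m\<bar> + real_of_int \<bar>n\<bar>) * cmod (a (m, n))) summable_on UNIV"
proof -
  obtain C where C: "\<And>m n. (1 + real_of_int \<bar>m\<bar> + real_of_int \<bar>n\<bar>) ^ 5 * cmod (a (m, n)) \<le> C"
    using assms unfolding nct_schwartz_def by blast
  let ?w = "\<lambda>m::int. 1 / (1 + real_of_int \<bar>m\<bar>) ^ 2"
  have bound: "(1 + real_of_int \<bar>m\<bar> + real_of_int \<bar>n\<bar>) * cmod (a (m, n)) \<le> C * (?w m * ?w n)" for m n
  proof -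
    define s where "s = 1 + real_of_int \<bar>m\<bar> + real_of_int \<bar>n\<bar>"
    define u where "u = (1 + real_of_int \<bar>m\<bar>) * (1 + real_of_int \<bar>n\<bar>)"
    define c where "c = cmod (a (m, n))"
    have "s \<ge> 1" "u \<ge> 1" "c \<ge> 0"
      using mult_mono[of 1 "1 + real_of_int \<bar>m\<bar>" 1 "1 + real_of_int \<bar>n\<bar>"] by (auto simp: s_def u_def c_def)
    have "u \<le> s ^ 2"
      unfolding u_def s_def power2_eq_square by (simp add: algebra_simps)
    then have "u ^ 2 \<le> (s ^ 2) ^ 2"
      by (rule power_mono) (use \<open>u \<ge> 1\<close> in auto)
    then have "s * c * u ^ 2 \<le> s * c * s ^ 4"
      by (intro mult_left_mono) (use \<open>s \<ge> 1\<close> \<open>c \<ge> 0\<close> in auto)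
    also have "\<dots> = s ^ 5 * c"
      by (simp add: power_numeral_reduce)
    also have "\<dots> \<le> C"
      using C[of m n] by (simp add: s_def c_def)
    finally have "s * c \<le> C / u ^ 2"
      using \<open>u \<ge> 1\<close> by (simp add: field_simps)
    then show ?thesis
      by (simp add: s_def c_def u_def power_mult_distrib)
  qed
  have "(\<lambda>(m, n). C * (?w m * ?w n)) summable_on UNIV"
    using summable_on_cmult_right[OF summable_on_product_nonneg[OF summable_on_int_inverse_square summable_on_int_inverse_square]]
    by (simp add: case_prod_unfold)
  then show ?thesis
  proof (rule summable_on_comparison_test)
    fix z :: "int \<times> int"
    show "(\<lambda>(m, n). (1 + real_of_int \<bar>m\<bar> + real_of_int \<bar>n\<bar>) * cmod (a (m, n))) z
        \<le> (\<lambda>(m, n). C * (?w m * ?w n)) z"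
      using bound[of "fst z" "snd z"] by (simp add: case_prod_unfold)
  qed (simp add: case_prod_unfold)
qed

lemma nct_schwartz_l1:
  assumes "nct_schwartz a"
  shows "nct_l1 a" "nct_l1 (nct_d1 a)" "nct_l1 (nct_d2 a)"
proof -
  let ?W = "\<lambda>(m, n). 2 * pi * ((1 + real_of_int \<bar>m\<bar> + real_of_int \<bar>n\<bar>) * cmod (a (m, n)))"
  have W: "?W summable_on UNIV"
    using summable_on_cmult_right[OF nct_schwartz_weighted_l1[OF assms], of "2 * pi"]
    by (simp add: case_prod_unfold)
  have bounds: "norm (a z) \<le> ?W z" "norm (nct_d1 a z) \<le> ?W z" "norm (nct_d2 a z) \<le> ?W z" for z
  proof -
    obtain m n where z: "z = (m, n)" by (cases z)
    have "norm (a z) \<le> (1 + real_of_int \<bar>m\<bar> + real_of_int \<bar>n\<bar>) * cmod (a (m, n))"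
      using mult_right_mono[of 1 "1 + real_of_int \<bar>m\<bar> + real_of_int \<bar>n\<bar>" "cmod (a (m, n))"] by (simp add: z)
    also have "\<dots> \<le> ?W z"
      using mult_right_mono[of 1 "2 * pi" "(1 + real_of_int \<bar>m\<bar> + real_of_int \<bar>n\<bar>) * cmod (a (m, n))"] pi_gt3
      by (simp add: z)
    finally show "norm (a z) \<le> ?W z" .
    have "norm (nct_d1 a z) = 2 * pi * (real_of_int \<bar>m\<bar> * cmod (a (m, n)))"
      by (simp add: z nct_d1_def norm_mult)
    also have "\<dots> \<le> ?W z"
      unfolding z by (simp, intro mult_left_mono mult_right_mono) auto
    finally show "norm (nct_d1 a z) \<le> ?W z" .
    have "norm (nct_d2 a z) = 2 * pi * (real_of_int \<bar>n\<bar> * cmod (a (m, n)))"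
      by (simp add: z nct_d2_def norm_mult)
    also have "\<dots> \<le> ?W z"
      unfolding z by (simp, intro mult_left_mono mult_right_mono) auto
    finally show "norm (nct_d2 a z) \<le> ?W z" .
  qed
  show "nct_l1 a"
    by (rule summable_on_comparison_test[OF W]) (rule bounds(1), simp)
  show "nct_l1 (nct_d1 a)"
    by (rule summable_on_comparison_test[OF W]) (rule bounds(2), simp)
  show "nct_l1 (nct_d2 a)"
    by (rule summable_on_comparison_test[OF W]) (rule bounds(3), simp)
qed

lemma nct_mult_series_summable:
  assumes "nct_l1 a" "nct_l1 b"
  shows "(\<lambda>m. a m * b (k - m) * nct_phase \<theta> (snd m * (fst k - fst m))) summable_on UNIV"
proof -
  obtain B where B: "\<And>k. norm (b k) \<le> B"
    using nct_l1_bounded[OF assms(2)] by blast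
  have "(\<lambda>m. norm (a m * b (k - m) * nct_phase \<theta> (snd m * (fst k - fst m)))) summable_on UNIV"
  proof (rule Infinite_Sum.abs_summable_on_comparison_test')
    show "(\<lambda>m. B * norm (a m)) summable_on UNIV"
      using assms(1) by (rule summable_on_cmult_right)
    show "norm (a m * b (k - m) * nct_phase \<theta> (snd m * (fst k - fst m))) \<le> B * norm (a m)" for m
      using mult_left_mono[OF B, of "norm (a m)" "k - m"] by (simp add: norm_mult mult.commute)
  qed
  then show ?thesis
    by (simp add: summable_on_iff_abs_summable_on_complex)
qed

lemma nct_l1_convolution:
  assumes "nct_l1 a" "nct_l1 b"
  shows "(\<lambda>(k, m). norm (a m) * norm (b (k - m))) summable_on UNIV"
proof -
  have "(\<lambda>(x, y). norm (a x) * norm (b y)) summable_on UNIV"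
    using assms by (intro summable_on_product_nonneg) auto
  then have "(\<lambda>x. (\<lambda>(x, y). norm (a x) * norm (b y)) ((\<lambda>(q, m). (m, q - m)) x)) summable_on UNIV"
    by (subst summable_on_reindex_bij_betw[OF bij_betw_convolution])
  then show ?thesis
    by (simp add: case_prod_unfold)
qed

lemma nct_l1_mult:
  assumes "nct_l1 a" "nct_l1 b"
  shows "nct_l1 (nct_mult \<theta> a b)"
proof -
  have "(\<lambda>k. \<Sum>\<^sub>\<infinity>m. norm (a m) * norm (b (k - m))) summable_on UNIV"
    using summable_on_Sigma_banach[where f="\<lambda>k m. norm (a m) * norm (b (k - m))" and A=UNIV and B="\<lambda>_. UNIV"]
      nct_l1_convolution[OF assms] by simp
  then show ?thesis
  proof (rule summable_on_comparison_test)
    fix k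
    have "norm (nct_mult \<theta> a b k)
        \<le> (\<Sum>\<^sub>\<infinity>m. norm (a m * b (k - m) * nct_phase \<theta> (snd m * (fst k - fst m))))"
      unfolding nct_mult_apply
      by (rule norm_infsum_bound)
        (use nct_mult_series_summable[OF assms] in \<open>simp add: summable_on_iff_abs_summable_on_complex\<close>)
    then show "norm (nct_mult \<theta> a b k) \<le> (\<Sum>\<^sub>\<infinity>m. norm (a m) * norm (b (k - m)))"
      by (simp add: norm_mult)
  qed auto
qed

lemma nct_mult_lincomb_left:
  assumes "nct_l1 a" "nct_l1 b" "nct_l1 c"
  shows "nct_mult \<theta> (\<lambda>k. x * a k + y * b k) c = (\<lambda>r. x * nct_mult \<theta> a c r + y * nct_mult \<theta> b c r)"
proof
  fix r
  let ?t = "\<lambda>a m. a m * c (r - m) * nct_phase \<theta> (snd m * (fst r - fst m))"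
  have "nct_mult \<theta> (\<lambda>k. x * a k + y * b k) c r = (\<Sum>\<^sub>\<infinity>m. x * ?t a m + y * ?t b m)"
    unfolding nct_mult_apply by (rule infsum_cong) (simp add: algebra_simps)
  also have "\<dots> = x * nct_mult \<theta> a c r + y * nct_mult \<theta> b c r"
    unfolding nct_mult_apply
    using nct_mult_series_summable[OF assms(1,3), where k=r and \<theta>=\<theta>]
      nct_mult_series_summable[OF assms(2,3), where k=r and \<theta>=\<theta>]
    by (subst infsum_add) (auto intro: summable_on_cmult_right simp: infsum_cmult_right')
  finally show "nct_mult \<theta> (\<lambda>k. x * a k + y * b k) c r = x * nct_mult \<theta> a c r + y * nct_mult \<theta> b c r" .
qed

lemma nct_mult_lincomb_right:
  assumes "nct_l1 a" "nct_l1 b" "nct_l1 c"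
  shows "nct_mult \<theta> c (\<lambda>k. x * a k + y * b k) = (\<lambda>r. x * nct_mult \<theta> c a r + y * nct_mult \<theta> c b r)"
proof
  fix r
  let ?t = "\<lambda>a m. c m * a (r - m) * nct_phase \<theta> (snd m * (fst r - fst m))"
  have "nct_mult \<theta> c (\<lambda>k. x * a k + y * b k) r = (\<Sum>\<^sub>\<infinity>m. x * ?t a m + y * ?t b m)"
    unfolding nct_mult_apply by (rule infsum_cong) (simp add: algebra_simps)
  also have "\<dots> = x * nct_mult \<theta> c a r + y * nct_mult \<theta> c b r"
    unfolding nct_mult_apply
    using nct_mult_series_summable[OF assms(3,1), where k=r and \<theta>=\<theta>]
      nct_mult_series_summable[OF assms(3,2), where k=r and \<theta>=\<theta>]
    by (subst infsum_add) (auto intro: summable_on_cmult_right simp: infsum_cmult_right')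
  finally show "nct_mult \<theta> c (\<lambda>k. x * a k + y * b k) r = x * nct_mult \<theta> c a r + y * nct_mult \<theta> c b r" .
qed

lemma nct_mult_add_left:
  assumes "nct_l1 a" "nct_l1 b" "nct_l1 c"
  shows "nct_mult \<theta> (\<lambda>k. a k + b k) c = (\<lambda>r. nct_mult \<theta> a c r + nct_mult \<theta> b c r)"
  using nct_mult_lincomb_left[OF assms, of \<theta> 1 1] by simp

lemma nct_mult_add_right:
  assumes "nct_l1 a" "nct_l1 b" "nct_l1 c"
  shows "nct_mult \<theta> c (\<lambda>k. a k + b k) = (\<lambda>r. nct_mult \<theta> c a r + nct_mult \<theta> c b r)"
  using nct_mult_lincomb_right[OF assms, of \<theta> 1 1] by simp

lemma nct_mult_zero_left [simp]: "nct_mult \<theta> (\<lambda>_. 0) b = (\<lambda>_. 0)"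
  by (rule ext) (simp add: nct_mult_apply)

lemma nct_mult_zero_right [simp]: "nct_mult \<theta> a (\<lambda>_. 0) = (\<lambda>_. 0)"
  by (rule ext) (simp add: nct_mult_apply)

lemma nct_mult_lincomb:
  assumes "nct_l1 a" "nct_l1 b"
  shows "nct_mult \<theta> (\<lambda>k. x1 * a k + y1 * b k) (\<lambda>k. x2 * a k + y2 * b k) =
    (\<lambda>r. x1 * x2 * nct_mult \<theta> a a r + x1 * y2 * nct_mult \<theta> a b r
      + y1 * x2 * nct_mult \<theta> b a r + y1 * y2 * nct_mult \<theta> b b r)"
  using assms by (simp add: nct_mult_lincomb_left nct_mult_lincomb_right nct_l1_lincomb algebra_simps)

lemma nct_int_mult_lincomb:
  assumes "nct_l1 a" "nct_l1 b"
  shows "nct_int (nct_mult \<theta> (\<lambda>k. x1 * a k + y1 * b k) (\<lambda>k. x2 * a k + y2 * b k)) =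
    x1 * x2 * nct_int (nct_mult \<theta> a a) + x1 * y2 * nct_int (nct_mult \<theta> a b)
    + y1 * x2 * nct_int (nct_mult \<theta> b a) + y1 * y2 * nct_int (nct_mult \<theta> b b)"
  by (simp add: nct_mult_lincomb[OF assms] nct_int_def)

lemma nct_mult_assoc:
  assumes "nct_l1 a" "nct_l1 b" "nct_l1 c"
  shows "nct_mult \<theta> (nct_mult \<theta> a b) c = nct_mult \<theta> a (nct_mult \<theta> b c)"
proof
  fix k :: "int \<times> int"
  obtain Bc where Bc: "\<And>k. norm (c k) \<le> Bc"
    using nct_l1_bounded[OF assms(3)] by blast
  define G where "G = (\<lambda>(m::int \<times> int, j::int \<times> int). a m * b j * c (k - m - j) *
       nct_phase \<theta> (snd j * (fst k - fst m - fst j) + snd m * (fst k - fst m)))"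
  have "(\<lambda>z. norm (G z)) summable_on UNIV"
  proof (rule summable_on_comparison_test)
    show "(\<lambda>(x, y). Bc * (norm (a x) * norm (b y))) summable_on UNIV"
      using summable_on_cmult_right[OF summable_on_product_nonneg[of "\<lambda>x. norm (a x)" "\<lambda>y. norm (b y)"]]
        assms(1,2) by (simp add: case_prod_unfold)
    fix z :: "(int \<times> int) \<times> (int \<times> int)"
    obtain m j where z: "z = (m, j)" by (cases z)
    have "norm (G z) \<le> norm (a m) * norm (b j) * Bc"
      by (simp add: G_def z norm_mult Bc mult_left_mono)
    then show "norm (G z) \<le> (\<lambda>(x, y). Bc * (norm (a x) * norm (b y))) z"
      by (simp add: z mult.commute)
  qed auto
  then have G_summable: "G summable_on UNIV"
    by (simp add: summable_on_iff_abs_summable_on_complex)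
  have "nct_mult \<theta> a (nct_mult \<theta> b c) k = (\<Sum>\<^sub>\<infinity>m. \<Sum>\<^sub>\<infinity>j. G (m, j))"
    unfolding nct_mult_apply
  proof (rule infsum_cong)
    fix m :: "int \<times> int"
    have "nct_phase \<theta> (snd j * (fst (k - m) - fst j)) * nct_phase \<theta> (snd m * (fst k - fst m))
        = nct_phase \<theta> (snd j * (fst k - fst m - fst j) + snd m * (fst k - fst m))" for j :: "int \<times> int"
      by (rule nct_phase_mult_eqI) simp
    then show "a m * (\<Sum>\<^sub>\<infinity>j. b j * c (k - m - j) * nct_phase \<theta> (snd j * (fst (k - m) - fst j)))
        * nct_phase \<theta> (snd m * (fst k - fst m)) = (\<Sum>\<^sub>\<infinity>j. G (m, j))"
      by (simp add: G_def infsum_cmult_right'[symmetric] infsum_cmult_left'[symmetric] mult.assoc)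
  qed
  also have "\<dots> = (\<Sum>\<^sub>\<infinity>q. \<Sum>\<^sub>\<infinity>m. G (m, q - m))"
    by (rule infsum_convolution_reindex[OF G_summable])
  also have "\<dots> = nct_mult \<theta> (nct_mult \<theta> a b) c k"
    unfolding nct_mult_apply
  proof (rule infsum_cong)
    fix q :: "int \<times> int"
    have "(\<Sum>\<^sub>\<infinity>m. G (m, q - m)) = (\<Sum>\<^sub>\<infinity>m. a m * b (q - m) * nct_phase \<theta> (snd m * (fst q - fst m))
        * c (k - q) * nct_phase \<theta> (snd q * (fst k - fst q)))"
    proof (rule infsum_cong)
      fix m :: "int \<times> int"
      have "nct_phase \<theta> (snd m * (fst q - fst m)) * nct_phase \<theta> (snd q * (fst k - fst q))
          = nct_phase \<theta> (snd (q - m) * (fst k - fst m - fst (q - m)) + snd m * (fst k - fst m))"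
        by (rule nct_phase_mult_eqI) (simp add: algebra_simps)
      moreover have "k - m - (q - m) = k - q" by simp
      ultimately show "G (m, q - m) = a m * b (q - m) * nct_phase \<theta> (snd m * (fst q - fst m))
          * c (k - q) * nct_phase \<theta> (snd q * (fst k - fst q))"
        unfolding G_def by (simp add: ac_simps)
    qed
    then show "(\<Sum>\<^sub>\<infinity>m. G (m, q - m)) = (\<Sum>\<^sub>\<infinity>m. a m * b (q - m) * nct_phase \<theta> (snd m * (fst q - fst m)))
        * c (k - q) * nct_phase \<theta> (snd q * (fst k - fst q))"
      by (simp add: infsum_cmult_left')
  qed
  finally show "nct_mult \<theta> (nct_mult \<theta> a b) c k = nct_mult \<theta> a (nct_mult \<theta> b c) k" ..
qed

lemma nct_int_mult_commute: "nct_int (nct_mult \<theta> a b) = nct_int (nct_mult \<theta> b a)"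
proof -
  have "nct_int (nct_mult \<theta> b a) = (\<Sum>\<^sub>\<infinity>m. b m * a (- m) * nct_phase \<theta> (snd m * (- fst m)))"
    by (simp add: nct_int_def nct_mult_apply zero_prod_def[symmetric])
  also have "\<dots> = (\<Sum>\<^sub>\<infinity>m. a m * b (- m) * nct_phase \<theta> (snd m * (- fst m)))"
    by (rule infsum_reindex_bij_witness[of UNIV uminus uminus]) (auto simp: algebra_simps)
  also have "\<dots> = nct_int (nct_mult \<theta> a b)"
    by (simp add: nct_int_def nct_mult_apply zero_prod_def[symmetric])
  finally show ?thesis ..
qed

lemma nct_star_mult: "nct_star \<theta> (nct_mult \<theta> a b) = nct_mult \<theta> (nct_star \<theta> b) (nct_star \<theta> a)"
proof
  fix r :: "int \<times> int"
  have "nct_star \<theta> (nct_mult \<theta> a b) r =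
     (\<Sum>\<^sub>\<infinity>m. cnj (a m * b (- r - m) * nct_phase \<theta> (snd m * (fst (- r) - fst m))) * nct_phase \<theta> (fst r * snd r))"
    by (simp only: nct_star_apply nct_mult_apply infsum_cnj infsum_cmult_left')
  also have "\<dots> = (\<Sum>\<^sub>\<infinity>m. nct_star \<theta> b (r + m) * nct_star \<theta> a (r - (r + m))
      * nct_phase \<theta> (snd (r + m) * (fst r - fst (r + m))))"
  proof (rule infsum_cong)
    fix m :: "int \<times> int"
    have "cnj (a m * b (- r - m) * nct_phase \<theta> (snd m * (fst (- r) - fst m))) * nct_phase \<theta> (fst r * snd r)
        = cnj (a m) * cnj (b (- r - m))
          * (nct_phase \<theta> (- (snd m * (fst (- r) - fst m))) * nct_phase \<theta> (fst r * snd r))"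
      by (simp add: cnj_nct_phase mult_ac)
    also have "nct_phase \<theta> (- (snd m * (fst (- r) - fst m))) * nct_phase \<theta> (fst r * snd r)
        = nct_phase \<theta> (fst (r + m) * snd (r + m)) * nct_phase \<theta> (fst (- m) * snd (- m))
          * nct_phase \<theta> (snd (r + m) * (fst r - fst (r + m)))"
      unfolding nct_phase_add[symmetric] by (rule arg_cong[where f="nct_phase \<theta>"]) (simp add: algebra_simps)
    finally have "cnj (a m * b (- r - m) * nct_phase \<theta> (snd m * (fst (- r) - fst m))) * nct_phase \<theta> (fst r * snd r)
        = cnj (a m) * cnj (b (- r - m)) * (nct_phase \<theta> (fst (r + m) * snd (r + m)) * nct_phase \<theta> (fst (- m) * snd (- m))
          * nct_phase \<theta> (snd (r + m) * (fst r - fst (r + m))))" .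
    moreover have "- r - m = - (r + m)" and "r - (r + m) = - m"
      by simp_all
    ultimately show "cnj (a m * b (- r - m) * nct_phase \<theta> (snd m * (fst (- r) - fst m))) * nct_phase \<theta> (fst r * snd r) =
        nct_star \<theta> b (r + m) * nct_star \<theta> a (r - (r + m)) * nct_phase \<theta> (snd (r + m) * (fst r - fst (r + m)))"
      unfolding nct_star_apply by (simp only: minus_minus mult_ac)
  qed
  also have "\<dots> = nct_mult \<theta> (nct_star \<theta> b) (nct_star \<theta> a) r"
    unfolding nct_mult_apply
    by (rule infsum_reindex_bij_witness[of UNIV "\<lambda>j. j - r" "\<lambda>m. r + m"]) auto
  finally show "nct_star \<theta> (nct_mult \<theta> a b) r = nct_mult \<theta> (nct_star \<theta> b) (nct_star \<theta> a) r" .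
qed

definition nct_sq_norm :: "real \<Rightarrow> nct \<Rightarrow> complex" where
  "nct_sq_norm \<theta> a = nct_int (nct_mult \<theta> (nct_star \<theta> a) a)"

lemma nct_sq_norm_eq: "nct_sq_norm \<theta> a = (\<Sum>\<^sub>\<infinity>m. complex_of_real (norm (a m) ^ 2))"
proof -
  have "nct_sq_norm \<theta> a = (\<Sum>\<^sub>\<infinity>m. complex_of_real (norm (a (- m)) ^ 2))"
    unfolding nct_sq_norm_def nct_int_def zero_prod_def[symmetric] nct_mult_apply
  proof (rule infsum_cong)
    fix m :: "int \<times> int"
    let ?P = "nct_phase \<theta> (snd m * (fst (0::int \<times> int) - fst m))"
    have "nct_star \<theta> a m * a (0 - m) * ?P = cnj (a (- m)) * a (- m) * (nct_phase \<theta> (fst m * snd m) * ?P)"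
      by (simp add: nct_star_apply mult_ac)
    also have "nct_phase \<theta> (fst m * snd m) * ?P = 1"
      by (simp add: nct_phase_add[symmetric] algebra_simps)
    finally have "nct_star \<theta> a m * a (0 - m) * ?P = cnj (a (- m)) * a (- m)"
      by simp
    then show "nct_star \<theta> a m * a (0 - m) * ?P = complex_of_real (norm (a (- m)) ^ 2)"
      by (metis complex_norm_square mult.commute of_real_power)
  qed
  also have "\<dots> = (\<Sum>\<^sub>\<infinity>m. complex_of_real (norm (a m) ^ 2))"
    by (rule infsum_reindex_bij_witness[of UNIV uminus uminus]) auto
  finally show ?thesis .
qed

lemma nct_sq_norm_nonneg: "nct_sq_norm \<theta> a \<ge> 0"
proof (cases "(\<lambda>m. complex_of_real (norm (a m) ^ 2)) summable_on UNIV")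
  case True
  then show ?thesis
    unfolding nct_sq_norm_eq by (rule infsum_nonneg_complex) (simp add: less_eq_complex_def)
next
  case False
  then show ?thesis
    by (simp add: nct_sq_norm_eq infsum_not_exists)
qed

lemma nct_sq_norm_zero [simp]: "nct_sq_norm \<theta> (\<lambda>_. 0) = 0"
  by (simp add: nct_sq_norm_eq)

section \<open>Derivatives of projections\<close>

lemma nct_mult_weight_leibniz:
  fixes w :: "int \<times> int \<Rightarrow> complex"
  assumes "nct_l1 a" "nct_l1 b" "nct_l1 (\<lambda>k. w k * a k)" "nct_l1 (\<lambda>k. w k * b k)"
    and additive: "\<And>m j. w (m + j) = w m + w j"
  shows "(\<lambda>k. w k * nct_mult \<theta> a b k)
    = (\<lambda>k. nct_mult \<theta> (\<lambda>k. w k * a k) b k + nct_mult \<theta> a (\<lambda>k. w k * b k) k)"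
proof
  fix k :: "int \<times> int"
  let ?P = "\<lambda>m. nct_phase \<theta> (snd m * (fst k - fst m))"
  have "w k * nct_mult \<theta> a b k = (\<Sum>\<^sub>\<infinity>m. w m * a m * b (k - m) * ?P m + a m * (w (k - m) * b (k - m)) * ?P m)"
    unfolding nct_mult_apply infsum_cmult_right'[symmetric]
  proof (rule infsum_cong)
    fix m :: "int \<times> int"
    have "w k = w m + w (k - m)"
      using additive[of m "k - m"] by simp
    then show "w k * (a m * b (k - m) * ?P m) = w m * a m * b (k - m) * ?P m + a m * (w (k - m) * b (k - m)) * ?P m"
      by (simp add: algebra_simps)
  qed
  also have "\<dots> = nct_mult \<theta> (\<lambda>k. w k * a k) b k + nct_mult \<theta> a (\<lambda>k. w k * b k) k"
    unfolding nct_mult_apply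
    by (rule infsum_add[OF nct_mult_series_summable[OF assms(3,2)] nct_mult_series_summable[OF assms(1,4)]])
  finally show "w k * nct_mult \<theta> a b k = nct_mult \<theta> (\<lambda>k. w k * a k) b k + nct_mult \<theta> a (\<lambda>k. w k * b k) k" .
qed

lemma nct_d1_mult:
  assumes "nct_l1 a" "nct_l1 b" "nct_l1 (nct_d1 a)" "nct_l1 (nct_d1 b)"
  shows "nct_d1 (nct_mult \<theta> a b) = (\<lambda>k. nct_mult \<theta> (nct_d1 a) b k + nct_mult \<theta> a (nct_d1 b) k)"
  using nct_mult_weight_leibniz[of a b "\<lambda>m. 2 * pi * \<i> * of_int (fst m)" \<theta>] assms
  unfolding nct_d1_eq by (simp add: algebra_simps)

lemma nct_d2_mult:
  assumes "nct_l1 a" "nct_l1 b" "nct_l1 (nct_d2 a)" "nct_l1 (nct_d2 b)"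
  shows "nct_d2 (nct_mult \<theta> a b) = (\<lambda>k. nct_mult \<theta> (nct_d2 a) b k + nct_mult \<theta> a (nct_d2 b) k)"
  using nct_mult_weight_leibniz[of a b "\<lambda>m. 2 * pi * \<i> * of_int (snd m)" \<theta>] assms
  unfolding nct_d2_eq by (simp add: algebra_simps)

text \<open>For idempotent p the equation d = d p + p d says that d has no diagonal blocks: p d p = 0 = (1 - p) d (1 - p).\<close>
definition nct_off_diagonal :: "real \<Rightarrow> nct \<Rightarrow> nct \<Rightarrow> bool" where
  "nct_off_diagonal \<theta> p d \<longleftrightarrow> d = (\<lambda>k. nct_mult \<theta> d p k + nct_mult \<theta> p d k)"

lemma nct_off_diagonal_d1:
  assumes "nct_l1 p" "nct_l1 (nct_d1 p)" "nct_mult \<theta> p p = p"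
  shows "nct_off_diagonal \<theta> p (nct_d1 p)"
proof -
  have "nct_d1 (nct_mult \<theta> p p) = (\<lambda>k. nct_mult \<theta> (nct_d1 p) p k + nct_mult \<theta> p (nct_d1 p) k)"
    by (rule nct_d1_mult[OF assms(1,1,2,2)])
  then show ?thesis
    unfolding nct_off_diagonal_def assms(3) .
qed

lemma nct_off_diagonal_d2:
  assumes "nct_l1 p" "nct_l1 (nct_d2 p)" "nct_mult \<theta> p p = p"
  shows "nct_off_diagonal \<theta> p (nct_d2 p)"
proof -
  have "nct_d2 (nct_mult \<theta> p p) = (\<lambda>k. nct_mult \<theta> (nct_d2 p) p k + nct_mult \<theta> p (nct_d2 p) k)"
    by (rule nct_d2_mult[OF assms(1,1,2,2)])
  then show ?thesis
    unfolding nct_off_diagonal_def assms(3) .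
qed

lemma nct_off_diagonal_lincomb:
  assumes "nct_l1 p" "nct_l1 a" "nct_l1 b" "nct_off_diagonal \<theta> p a" "nct_off_diagonal \<theta> p b"
  shows "nct_off_diagonal \<theta> p (\<lambda>k. x * a k + y * b k)"
  unfolding nct_off_diagonal_def
proof
  fix k
  have "x * a k + y * b k = x * (nct_mult \<theta> a p k + nct_mult \<theta> p a k) + y * (nct_mult \<theta> b p k + nct_mult \<theta> p b k)"
    using fun_cong[OF assms(4)[unfolded nct_off_diagonal_def], of k] fun_cong[OF assms(5)[unfolded nct_off_diagonal_def], of k]
    by simp
  then show "x * a k + y * b k
      = nct_mult \<theta> (\<lambda>k. x * a k + y * b k) p k + nct_mult \<theta> p (\<lambda>k. x * a k + y * b k) k"
    using assms(1-3) by (simp add: nct_mult_lincomb_left nct_mult_lincomb_right algebra_simps)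
qed

lemma nct_off_diagonal_sandwich:
  assumes "nct_l1 p" "nct_l1 d" "nct_mult \<theta> p p = p" "nct_off_diagonal \<theta> p d"
  shows "nct_mult \<theta> p (nct_mult \<theta> d p) = (\<lambda>_. 0)"
proof -
  have "nct_mult \<theta> p d = nct_mult \<theta> p (\<lambda>k. nct_mult \<theta> d p k + nct_mult \<theta> p d k)"
    using assms(4) unfolding nct_off_diagonal_def by (rule arg_cong)
  also have "\<dots> = (\<lambda>k. nct_mult \<theta> p (nct_mult \<theta> d p) k + nct_mult \<theta> p (nct_mult \<theta> p d) k)"
    using assms(1,2) by (simp add: nct_mult_add_right nct_l1_mult)
  also have "nct_mult \<theta> p (nct_mult \<theta> p d) = nct_mult \<theta> p d"
    using nct_mult_assoc[OF assms(1,1,2), of \<theta>] unfolding assms(3) by (rule sym)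
  finally have "nct_mult \<theta> p d k = nct_mult \<theta> p (nct_mult \<theta> d p) k + nct_mult \<theta> p d k" for k
    by (rule fun_cong)
  then have "nct_mult \<theta> p (nct_mult \<theta> d p) k = 0" for k
    by (metis add_cancel_left_left)
  then show ?thesis
    by (simp add: fun_eq_iff)
qed

lemma nct_int_off_diagonal_mult:
  assumes "nct_l1 p" "nct_l1 d" "nct_l1 e" "nct_off_diagonal \<theta> p d"
  shows "nct_int (nct_mult \<theta> d e)
    = nct_int (nct_mult \<theta> (nct_mult \<theta> p d) e) + nct_int (nct_mult \<theta> (nct_mult \<theta> p e) d)"
proof -
  have "nct_mult \<theta> d e = nct_mult \<theta> (\<lambda>k. nct_mult \<theta> d p k + nct_mult \<theta> p d k) e"
    using assms(4) unfolding nct_off_diagonal_def by (rule arg_cong)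
  also have "\<dots> = (\<lambda>k. nct_mult \<theta> (nct_mult \<theta> d p) e k + nct_mult \<theta> (nct_mult \<theta> p d) e k)"
    using assms(1-3) by (simp add: nct_mult_add_left nct_l1_mult)
  also have "nct_mult \<theta> (nct_mult \<theta> d p) e = nct_mult \<theta> d (nct_mult \<theta> p e)"
    by (rule nct_mult_assoc[OF assms(2,1,3)])
  finally have "nct_int (nct_mult \<theta> d e)
      = nct_int (nct_mult \<theta> d (nct_mult \<theta> p e)) + nct_int (nct_mult \<theta> (nct_mult \<theta> p d) e)"
    by (simp add: nct_int_def)
  then show ?thesis
    using nct_int_mult_commute[of \<theta> d "nct_mult \<theta> p e"] by simp
qed

lemma nct_int_off_diagonal_sq_norm:
  assumes "nct_l1 p" "nct_l1 d" "nct_l1 e" "nct_mult \<theta> p p = p"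
    and "nct_off_diagonal \<theta> p d" "nct_off_diagonal \<theta> p e"
    and "nct_star \<theta> (nct_mult \<theta> d p) = nct_mult \<theta> p e"
  shows "nct_int (nct_mult \<theta> (nct_mult \<theta> p e) d) = nct_sq_norm \<theta> (nct_mult \<theta> d p)"
proof -
  have "nct_mult \<theta> (nct_mult \<theta> p e) d = nct_mult \<theta> (nct_mult \<theta> p e) (\<lambda>k. nct_mult \<theta> d p k + nct_mult \<theta> p d k)"
    using assms(5) unfolding nct_off_diagonal_def by (rule arg_cong)
  also have "\<dots> = (\<lambda>k. nct_mult \<theta> (nct_mult \<theta> p e) (nct_mult \<theta> d p) k
      + nct_mult \<theta> (nct_mult \<theta> p e) (nct_mult \<theta> p d) k)"
    using assms(1-3) by (simp add: nct_mult_add_right nct_l1_mult)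
  also have "nct_mult \<theta> (nct_mult \<theta> p e) (nct_mult \<theta> p d) = nct_mult \<theta> (nct_mult \<theta> p (nct_mult \<theta> e p)) d"
    using assms(1-3) by (simp add: nct_mult_assoc nct_l1_mult)
  also have "nct_mult \<theta> p (nct_mult \<theta> e p) = (\<lambda>_. 0)"
    using assms(1,3,4,6) by (rule nct_off_diagonal_sandwich)
  finally show ?thesis
    using assms(7) by (simp add: nct_sq_norm_def nct_int_def)
qed

section \<open>The frame of Cauchy-Riemann operators\<close>

lemma del_tau_lincomb:
  "del_tau \<tau> a = (\<lambda>k. (- cnj \<tau> / (\<tau> - cnj \<tau>)) * nct_d1 a k + (1 / (\<tau> - cnj \<tau>)) * nct_d2 a k)"
  by (rule ext) (simp add: del_tau_def algebra_simps)

lemma delbar_tau_lincomb: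
  "delbar_tau \<tau> a = (\<lambda>k. (\<tau> / (\<tau> - cnj \<tau>)) * nct_d1 a k + (- 1 / (\<tau> - cnj \<tau>)) * nct_d2 a k)"
  by (rule ext) (simp add: delbar_tau_def algebra_simps)

lemma nct_l1_del_tau:
  assumes "nct_l1 (nct_d1 a)" "nct_l1 (nct_d2 a)"
  shows "nct_l1 (del_tau \<tau> a)" "nct_l1 (delbar_tau \<tau> a)"
  unfolding del_tau_lincomb delbar_tau_lincomb by (rule nct_l1_lincomb[OF assms])+

lemma nct_star_del_tau:
  "nct_star \<theta> (del_tau \<tau> a) = delbar_tau \<tau> (nct_star \<theta> a)"
  "nct_star \<theta> (delbar_tau \<tau> a) = del_tau \<tau> (nct_star \<theta> a)"
proof -
  define d where "d = \<tau> - cnj \<tau>"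
  have "cnj d = - d"
    by (simp add: d_def)
  then show "nct_star \<theta> (del_tau \<tau> a) = delbar_tau \<tau> (nct_star \<theta> a)"
    "nct_star \<theta> (delbar_tau \<tau> a) = del_tau \<tau> (nct_star \<theta> a)"
    unfolding del_tau_lincomb delbar_tau_lincomb nct_star_lincomb nct_star_d1 nct_star_d2 d_def[symmetric]
    by simp_all
qed

definition wirtinger_coeff :: "complex \<Rightarrow> nat \<Rightarrow> complex" where
  "wirtinger_coeff \<tau> \<mu> = (if \<mu> = 1 then 1 else \<tau>)"

lemma nct_deriv_wirtinger:
  assumes "Im \<tau> \<noteq> 0" "\<mu> \<in> {1, 2}"
  shows "nct_deriv \<mu> a = (\<lambda>k. wirtinger_coeff \<tau> \<mu> * del_tau \<tau> a k + cnj (wirtinger_coeff \<tau> \<mu>) * delbar_tau \<tau> a k)"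
proof -
  define d where "d = \<tau> - cnj \<tau>"
  have "d \<noteq> 0"
    using assms(1) by (simp add: d_def complex_eq_iff)
  have cnj_\<tau>: "cnj \<tau> = \<tau> - d"
    by (simp add: d_def)
  show ?thesis
    using assms(2) \<open>d \<noteq> 0\<close> unfolding del_tau_def delbar_tau_def d_def[symmetric]
    by (auto simp: fun_eq_iff nct_deriv_def wirtinger_coeff_def cnj_\<tau> field_simps)
qed

lemma metric_inv_contraction_wirtinger:
  fixes P Q R T :: complex
  assumes "Im \<tau> > 0"
  shows "(\<Sum>\<mu>\<in>{1, 2}. \<Sum>\<nu>\<in>{1, 2}. of_real (sqrt_det_metric \<tau> * metric_inv \<tau> \<mu> \<nu>) *
      (wirtinger_coeff \<tau> \<mu> * wirtinger_coeff \<tau> \<nu> * P + wirtinger_coeff \<tau> \<mu> * cnj (wirtinger_coeff \<tau> \<nu>) * Q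
       + cnj (wirtinger_coeff \<tau> \<mu>) * wirtinger_coeff \<tau> \<nu> * R
       + cnj (wirtinger_coeff \<tau> \<mu>) * cnj (wirtinger_coeff \<tau> \<nu>) * T))
    = 2 * of_real (Im \<tau>) * (Q + R)"
proof -
  obtain x y where \<tau>: "\<tau> = Complex x y"
    by (cases \<tau>)
  have "y > 0"
    using assms by (simp add: \<tau>)
  then have "sqrt_det_metric \<tau> = y"
    by (simp add: sqrt_det_metric_def metric_def \<tau> cmod_def power2_eq_square)
  moreover have "Complex x y = of_real x + \<i> * of_real y"
    by (simp add: complex_eq_iff)
  ultimately show ?thesis
    using \<open>y > 0\<close> unfolding metric_inv_def wirtinger_coeff_def \<tau>
    by (simp add: cmod_def field_simps power2_eq_square)
qed

lemma S_tau_eq_trace: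
  assumes "Im \<tau> > 0" "nct_l1 (nct_d1 p)" "nct_l1 (nct_d2 p)"
  defines "E \<equiv> del_tau \<tau> p" and "F \<equiv> delbar_tau \<tau> p"
  shows "S_tau \<tau> \<theta> p = of_real (Im \<tau> / pi) * (nct_int (nct_mult \<theta> E F) + nct_int (nct_mult \<theta> F E))"
proof -
  have \<tau>: "Im \<tau> \<noteq> 0"
    using assms(1) by simp
  let ?c = "wirtinger_coeff \<tau>"
  let ?g = "\<lambda>\<mu> \<nu>. complex_of_real (sqrt_det_metric \<tau> * metric_inv \<tau> \<mu> \<nu>)"
  have l1: "nct_l1 E" "nct_l1 F"
    unfolding E_def F_def by (rule nct_l1_del_tau[OF assms(2,3)])+
  have "nct_int (nct_mult \<theta> (nct_deriv \<mu> p) (nct_deriv \<nu> p))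
      = ?c \<mu> * ?c \<nu> * nct_int (nct_mult \<theta> E E) + ?c \<mu> * cnj (?c \<nu>) * nct_int (nct_mult \<theta> E F)
        + cnj (?c \<mu>) * ?c \<nu> * nct_int (nct_mult \<theta> F E) + cnj (?c \<mu>) * cnj (?c \<nu>) * nct_int (nct_mult \<theta> F F)"
    if "\<mu> \<in> {1, 2}" "\<nu> \<in> {1, 2}" for \<mu> \<nu>
    unfolding nct_deriv_wirtinger[OF \<tau> that(1)] nct_deriv_wirtinger[OF \<tau> that(2)] E_def[symmetric] F_def[symmetric]
    by (rule nct_int_mult_lincomb[OF l1])
  then have "S_tau \<tau> \<theta> p = (1 / (2 * pi)) * (\<Sum>\<mu>\<in>{1, 2}. \<Sum>\<nu>\<in>{1, 2}. ?g \<mu> \<nu> *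
      (?c \<mu> * ?c \<nu> * nct_int (nct_mult \<theta> E E) + ?c \<mu> * cnj (?c \<nu>) * nct_int (nct_mult \<theta> E F)
       + cnj (?c \<mu>) * ?c \<nu> * nct_int (nct_mult \<theta> F E) + cnj (?c \<mu>) * cnj (?c \<nu>) * nct_int (nct_mult \<theta> F F)))"
    unfolding S_tau_def by (intro arg_cong[where f="\<lambda>s. _ * s"] sum.cong refl) simp
  also have "\<dots> = (1 / (2 * pi)) * (2 * of_real (Im \<tau>) * (nct_int (nct_mult \<theta> E F) + nct_int (nct_mult \<theta> F E)))"
    by (simp only: metric_inv_contraction_wirtinger[OF assms(1)])
  finally show ?thesis
    by simp
qed

lemma psi_eq_trace:
  assumes "Im \<tau> > 0" "nct_l1 p" "nct_l1 (nct_d1 p)" "nct_l1 (nct_d2 p)"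
  defines "E \<equiv> del_tau \<tau> p" and "F \<equiv> delbar_tau \<tau> p"
  shows "psi \<theta> p = of_real (Im \<tau> / pi)
    * (nct_int (nct_mult \<theta> (nct_mult \<theta> p E) F) - nct_int (nct_mult \<theta> (nct_mult \<theta> p F) E))"
proof -
  have l1: "nct_l1 E" "nct_l1 F"
    unfolding E_def F_def by (rule nct_l1_del_tau[OF assms(3,4)])+
  have d1: "nct_d1 p = (\<lambda>k. 1 * E k + 1 * F k)" and d2: "nct_d2 p = (\<lambda>k. \<tau> * E k + cnj \<tau> * F k)"
    using nct_deriv_wirtinger[of \<tau> 1 p] nct_deriv_wirtinger[of \<tau> 2 p] assms(1)
    by (simp_all add: E_def F_def nct_deriv_def wirtinger_coeff_def)
  have "(\<lambda>k. nct_mult \<theta> (nct_d1 p) (nct_d2 p) k - nct_mult \<theta> (nct_d2 p) (nct_d1 p) k)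
      = (\<lambda>k. (cnj \<tau> - \<tau>) * nct_mult \<theta> E F k + (\<tau> - cnj \<tau>) * nct_mult \<theta> F E k)"
    unfolding d1 d2 nct_mult_lincomb[OF l1] by (simp add: fun_eq_iff algebra_simps)
  then have "psi \<theta> p = - (1 / (2 * pi * \<i>))
      * ((cnj \<tau> - \<tau>) * nct_int (nct_mult \<theta> p (nct_mult \<theta> E F)) + (\<tau> - cnj \<tau>) * nct_int (nct_mult \<theta> p (nct_mult \<theta> F E)))"
    unfolding psi_def using l1 assms(2)
    by (simp add: nct_mult_lincomb_right nct_l1_mult nct_int_def)
  also have "nct_mult \<theta> p (nct_mult \<theta> E F) = nct_mult \<theta> (nct_mult \<theta> p E) F"
    by (rule nct_mult_assoc[OF assms(2) l1, symmetric])
  also have "nct_mult \<theta> p (nct_mult \<theta> F E) = nct_mult \<theta> (nct_mult \<theta> p F) E"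
    by (rule nct_mult_assoc[OF assms(2) l1(2,1), symmetric])
  also have "\<tau> - cnj \<tau> = 2 * \<i> * of_real (Im \<tau>)"
    by (simp add: complex_eq_iff)
  also have "cnj \<tau> - \<tau> = - (2 * \<i> * of_real (Im \<tau>))"
    by (simp add: complex_eq_iff)
  also have "- (1 / (2 * pi * \<i>)) * (- (2 * \<i> * of_real (Im \<tau>)) * nct_int (nct_mult \<theta> (nct_mult \<theta> p E) F)
      + 2 * \<i> * of_real (Im \<tau>) * nct_int (nct_mult \<theta> (nct_mult \<theta> p F) E))
    = (2 * \<i> * of_real (Im \<tau>)) / (2 * pi * \<i>)
      * (nct_int (nct_mult \<theta> (nct_mult \<theta> p E) F) - nct_int (nct_mult \<theta> (nct_mult \<theta> p F) E))"
    by (simp add: algebra_simps)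
  also have "(2 * \<i> * of_real (Im \<tau>)) / (2 * pi * \<i>) = of_real (Im \<tau> / pi)"
    by simp
  finally show ?thesis .
qed

lemma S_tau_psi_projection:
  assumes "Im \<tau> > 0" "nct_projection \<theta> p"
  defines "E \<equiv> del_tau \<tau> p" and "F \<equiv> delbar_tau \<tau> p"
  shows "S_tau \<tau> \<theta> p
      = of_real (2 * (Im \<tau> / pi)) * (nct_sq_norm \<theta> (nct_mult \<theta> F p) + nct_sq_norm \<theta> (nct_mult \<theta> E p))"
    and "psi \<theta> p
      = of_real (Im \<tau> / pi) * (nct_sq_norm \<theta> (nct_mult \<theta> F p) - nct_sq_norm \<theta> (nct_mult \<theta> E p))"
proof -
  have sch: "nct_schwartz p" and idem: "nct_mult \<theta> p p = p" and self_adj: "nct_star \<theta> p = p"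
    using assms(2) unfolding nct_projection_def by auto
  note l1 = nct_schwartz_l1[OF sch]
  have l1_EF: "nct_l1 E" "nct_l1 F"
    unfolding E_def F_def by (rule nct_l1_del_tau[OF l1(2,3)])+
  have off: "nct_off_diagonal \<theta> p E" "nct_off_diagonal \<theta> p F"
    unfolding E_def F_def del_tau_lincomb delbar_tau_lincomb
    by (rule nct_off_diagonal_lincomb[OF l1 nct_off_diagonal_d1[OF l1(1,2) idem] nct_off_diagonal_d2[OF l1(1,3) idem]])+
  have X: "nct_int (nct_mult \<theta> (nct_mult \<theta> p E) F) = nct_sq_norm \<theta> (nct_mult \<theta> F p)"
    by (rule nct_int_off_diagonal_sq_norm[OF l1(1) l1_EF(2,1) idem off(2,1)])
      (simp add: E_def F_def nct_star_mult nct_star_del_tau self_adj)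
  have Y: "nct_int (nct_mult \<theta> (nct_mult \<theta> p F) E) = nct_sq_norm \<theta> (nct_mult \<theta> E p)"
    by (rule nct_int_off_diagonal_sq_norm[OF l1(1) l1_EF idem off])
      (simp add: E_def F_def nct_star_mult nct_star_del_tau self_adj)
  show "S_tau \<tau> \<theta> p
      = of_real (2 * (Im \<tau> / pi)) * (nct_sq_norm \<theta> (nct_mult \<theta> F p) + nct_sq_norm \<theta> (nct_mult \<theta> E p))"
    unfolding S_tau_eq_trace[OF assms(1) l1(2,3)] E_def[symmetric] F_def[symmetric]
      nct_int_off_diagonal_mult[OF l1(1) l1_EF off(1)] nct_int_off_diagonal_mult[OF l1(1) l1_EF(2,1) off(2)] X Y
    by (simp add: algebra_simps)
  show "psi \<theta> p
      = of_real (Im \<tau> / pi) * (nct_sq_norm \<theta> (nct_mult \<theta> F p) - nct_sq_norm \<theta> (nct_mult \<theta> E p))"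
    unfolding psi_eq_trace[OF assms(1) l1] E_def[symmetric] F_def[symmetric] X Y ..
qed

lemma complex_nonneg_sum_ge_diff:
  fixes X Y :: complex and c :: real
  assumes "c > 0" "X \<ge> 0" "Y \<ge> 0"
  shows "Im (of_real (2 * c) * (X + Y)) = 0"
    and "2 * cmod (of_real c * (X - Y)) \<le> Re (of_real (2 * c) * (X + Y))"
    and "X = 0 \<or> Y = 0 \<Longrightarrow> of_real (2 * c) * (X + Y) = of_real (2 * cmod (of_real c * (X - Y)))"
proof -
  define x y where "x = Re X" and "y = Re Y"
  have X: "X = of_real x" "x \<ge> 0" and Y: "Y = of_real y" "y \<ge> 0"
    using assms(2,3) by (auto simp: x_def y_def less_eq_complex_def complex_eq_iff)
  have norm: "cmod (of_real c * (X - Y)) = c * \<bar>x - y\<bar>"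
    using assms(1) by (simp add: X Y norm_mult flip: of_real_diff)
  show "Im (of_real (2 * c) * (X + Y)) = 0"
    by (simp add: X Y)
  show "2 * cmod (of_real c * (X - Y)) \<le> Re (of_real (2 * c) * (X + Y))"
    unfolding norm using assms(1) X Y by (simp add: abs_if mult_left_mono)
  show "X = 0 \<or> Y = 0 \<Longrightarrow> of_real (2 * c) * (X + Y) = of_real (2 * cmod (of_real c * (X - Y)))"
    unfolding norm using X Y by auto
qed

theorem mainTheorem1:
  fixes \<theta> :: real and \<tau> :: complex and p :: nct
  assumes "Im \<tau> > 0"
    and "nct_projection \<theta> p"
  shows "Im (S_tau \<tau> \<theta> p) = 0 \<and> Re (S_tau \<tau> \<theta> p) \<ge> 2 * cmod (psi \<theta> p)
     \<and> ((nct_mult \<theta> (delbar_tau \<tau> p) p = (\<lambda>_. 0)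
          \<or> nct_mult \<theta> p (del_tau \<tau> p) = (\<lambda>_. 0)
          \<or> nct_mult \<theta> (del_tau \<tau> p) p = (\<lambda>_. 0)
          \<or> nct_mult \<theta> p (delbar_tau \<tau> p) = (\<lambda>_. 0))
        \<longrightarrow> S_tau \<tau> \<theta> p = of_real (2 * cmod (psi \<theta> p)))"
proof -
  define E F where "E = del_tau \<tau> p" and "F = delbar_tau \<tau> p"
  define X Y where "X = nct_sq_norm \<theta> (nct_mult \<theta> F p)" and "Y = nct_sq_norm \<theta> (nct_mult \<theta> E p)"
  have "nct_star \<theta> p = p"
    using assms(2) by (simp add: nct_projection_def)
  then have adj: "nct_mult \<theta> F p = nct_star \<theta> (nct_mult \<theta> p E)" "nct_mult \<theta> E p = nct_star \<theta> (nct_mult \<theta> p F)"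
    by (simp_all add: E_def F_def nct_star_mult nct_star_del_tau)
  have "X = 0 \<or> Y = 0"
    if "nct_mult \<theta> F p = (\<lambda>_. 0) \<or> nct_mult \<theta> p E = (\<lambda>_. 0) \<or> nct_mult \<theta> E p = (\<lambda>_. 0) \<or> nct_mult \<theta> p F = (\<lambda>_. 0)"
    using that unfolding X_def Y_def adj by auto
  moreover have "Im \<tau> / pi > 0"
    using assms(1) by simp
  ultimately show ?thesis
    using S_tau_psi_projection[OF assms] complex_nonneg_sum_ge_diff[of "Im \<tau> / pi" X Y] nct_sq_norm_nonneg
    unfolding X_def Y_def E_def F_def by auto
qed

end
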